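(* Let $d\ge1$ and $\tilde\epsilon>0$ be sufficiently small (below an absolute constant), and set $p = \frac{2}{7}\sqrt{\frac{\log(3d)}{\tilde\epsilon}}$, assumed to be a positive integer, and $\gamma = 14\sqrt{\tilde\epsilon\log(3d)}$. Let $\Sigma\in\mathbb{R}^{d\times d}$ be symmetric positive semidefinite and let $\mathbf{M} = \mathbf{M}_G+\mathbf{M}_B$ with $\mathbf{M}_G\succeq 0$, $\mathbf{M}_B\succeq0$, $\|\mathbf{M}\|_p\le(1+\tilde\epsilon)\|\Sigma\|_p$ and $(1+\tilde\epsilon)\Sigma\succeq\mathbf{M}_G\succeq(1-\tilde\epsilon)\Sigma$. Let $\mathbf{M} = \sum_{j\in[d]}\lambda_jv_jv_j^\top$ and $\Sigma = \sum_{j\in[d]}\sigma_ju_ju_j^\top$ be eigendecompositions with $\lambda_1\ge\dots\ge\lambda_d$ and $\sigma_1\ge\dots\ge\sigma_d$, and let $t\in[d]$ satisfy $\sigma_{t+1}<(1-\gamma)\sigma_1$. Then $$\max_{j\in[t]} v_j^\top\Sigma v_j\ge(1-\gamma)\|\Sigma\|_\infty.$$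
   Context: $\|\cdot\|_p$ is the Schatten-$p$ norm ($\ell_p$ norm of the eigenvalues), $\|\Sigma\|_\infty = \sigma_1$ the largest eigenvalue; $\succeq$ is the Loewner order. (If $t = d$, the condition on $\sigma_{t+1}$ is vacuous.) *)

theory Defs
  imports Complex_Main
begin

text \<open>Real d x d matrices are represented as functions nat => nat => real with
  entries indexed by {..<d}; vectors in R^d as nat => real indexed by {..<d}.
  The dimension d is an explicit natural number so that the absolute constant
  in the statement can be quantified before d.\<close>

definition qform :: "nat \<Rightarrow> (nat \<Rightarrow> nat \<Rightarrow> real) \<Rightarrow> (nat \<Rightarrow> real) \<Rightarrow> real" where
  "qform d A x = (\<Sum>i<d. \<Sum>k<d. x i * A i k * x k)"

definition symmetric_mat :: "nat \<Rightarrow> (nat \<Rightarrow> nat \<Rightarrow> real) \<Rightarrow> bool" where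
  "symmetric_mat d A \<longleftrightarrow> (\<forall>i<d. \<forall>k<d. A i k = A k i)"

definition psd :: "nat \<Rightarrow> (nat \<Rightarrow> nat \<Rightarrow> real) \<Rightarrow> bool" where
  "psd d A \<longleftrightarrow> symmetric_mat d A \<and> (\<forall>x. qform d A x \<ge> 0)"

definition loewner_ge :: "nat \<Rightarrow> (nat \<Rightarrow> nat \<Rightarrow> real) \<Rightarrow> (nat \<Rightarrow> nat \<Rightarrow> real) \<Rightarrow> bool" where
  "loewner_ge d A B \<longleftrightarrow> psd d (\<lambda>i k. A i k - B i k)"

text \<open>Eigendecomposition A = sum_j lam_j v_j v_j^T with orthonormal v_0,...,v_{d-1}
  and eigenvalues sorted non-increasingly (0-indexed: lam 0 \<ge> lam 1 \<ge> ...).\<close>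
definition eigdecomp :: "nat \<Rightarrow> (nat \<Rightarrow> nat \<Rightarrow> real) \<Rightarrow> (nat \<Rightarrow> real) \<Rightarrow> (nat \<Rightarrow> nat \<Rightarrow> real) \<Rightarrow> bool" where
  "eigdecomp d A lam v \<longleftrightarrow>
     (\<forall>j<d. \<forall>l<d. (\<Sum>i<d. v j i * v l i) = (if j = l then 1 else 0)) \<and>
     (\<forall>i<d. \<forall>k<d. A i k = (\<Sum>j<d. lam j * v j i * v j k)) \<and>
     (\<forall>j l. j \<le> l \<longrightarrow> l < d \<longrightarrow> lam l \<le> lam j)"

definition eigenvalues :: "nat \<Rightarrow> (nat \<Rightarrow> nat \<Rightarrow> real) \<Rightarrow> (nat \<Rightarrow> real)" where
  "eigenvalues d A = (SOME lam. \<exists>v. eigdecomp d A lam v)"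

definition schatten :: "nat \<Rightarrow> real \<Rightarrow> (nat \<Rightarrow> nat \<Rightarrow> real) \<Rightarrow> real" where
  "schatten d p A = (\<Sum>j<d. \<bar>eigenvalues d A j\<bar> powr p) powr (1 / p)"

end

theory Submission
  imports Defs "Jordan_Normal_Form.Determinant" "HOL-Analysis.Analysis"
begin

(*
  Put c j k = (v_j . u_k)^2. Orthonormality makes c doubly stochastic, with
  v_j' Sigma v_j = sum_k c j k * sigma_k and u_k' M u_k = sum_j c j k * lambda_j; the latter is
  at least (1 - eps) sigma_k because M >= M_G >= (1 - eps) Sigma. For the integer p = n,
  Jensen's inequality upgrades this to T_k := sum_j c j k * lambda_j^n >= ((1 - eps) sigma_k)^n,
  whereas the Schatten bound gives sum_k T_k = sum_j lambda_j^n <= (1 + eps)^n sum_k sigma_k^n.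
  As n eps = gamma/49, the T_k exceed their lower bounds by at most 3 gamma/49 sum_k sigma_k^n.

  Suppose every v_j with j < t had Rayleigh quotient below (1 - gamma) sigma_1. Then the mass
  A = sum_{j<t} lambda_j^n satisfies gamma sigma_1 A <= sum_k (sigma_1 - sigma_k) T_k. Since
  n gamma/4 = log (3d), the weights sigma_k^n are concentrated, up to sigma_1^n/3, on the set K
  of k with sigma_k >= (1 - gamma/4) sigma_1, and this forces A <= (1/4 + 3/49) (S + sigma_1^n/3)
  where S = sum_{k in K} sigma_k^n. But the spectral gap puts K among the first t indices, so
  A >= sum_{k in K} T_k >= 48/49 S, and S >= sigma_1^n: a contradiction.
*)

section \<open>Elementary real inequalities\<close>

lemma power_convex_combination_le:
  fixes w x :: "'a \<Rightarrow> real"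
  assumes "finite S" "sum w S = 1" "\<And>i. i \<in> S \<Longrightarrow> 0 \<le> w i" "\<And>i. i \<in> S \<Longrightarrow> 0 \<le> x i"
  shows "(\<Sum>i\<in>S. w i * x i) ^ n \<le> (\<Sum>i\<in>S. w i * x i ^ n)"
proof -
  have convex: "convex_on {0::real..} (\<lambda>x. x ^ n)"
  proof (cases "even n")
    case True
    then show ?thesis using convex_power_even convex_on_subset by blast
  next
    case False
    then show ?thesis using convex_power_odd by blast
  qed
  have "S \<noteq> {}" using assms(2) by auto
  from convex_on_sum[OF assms(1) this convex assms(2) assms(3), of x] assms(4)
  show ?thesis by auto
qed

lemma diff_mult_power_mono:
  fixes s x y :: real
  assumes "0 \<le> x" "x \<le> y" "real (Suc n) * y \<le> real n * s"
  shows "(s - x) * x ^ n \<le> (s - y) * y ^ n"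
proof -
  have "(\<lambda>z. (s - z) * z ^ n) x \<le> (\<lambda>z. (s - z) * z ^ n) y"
  proof (rule DERIV_nonneg_imp_increasing_open[OF assms(2)])
    fix z assume z: "x < z" "z < y"
    have "DERIV (\<lambda>z. (s - z) * z ^ n) z :> (- 1) * z ^ n + (s - z) * (real n * z ^ (n - 1))"
      by (auto intro!: derivative_eq_intros)
    moreover have "(- 1) * z ^ n + (s - z) * (real n * z ^ (n - 1)) \<ge> 0"
    proof (cases n)
      case 0 then show ?thesis using z assms by simp
    next
      case (Suc m)
      have zp: "z > 0" using z assms by linarith
      have eq: "(- 1) * z ^ n + (s - z) * (real n * z ^ (n - 1)) = z ^ m * ((s - z) * real n - z)"
        using Suc by (simp add: algebra_simps)
      have "z * real (Suc n) \<le> y * real (Suc n)" using z by (intro mult_right_mono) auto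
      then have ge: "(s - z) * real n - z \<ge> 0" using z assms by (simp add: algebra_simps)
      show ?thesis unfolding eq using zp ge by simp
    qed
    ultimately show "\<exists>l. DERIV (\<lambda>z. (s - z) * z ^ n) z :> l \<and> l \<ge> 0" by blast
  next
    show "continuous_on {x..y} (\<lambda>z. (s - z) * z ^ n)" by (intro continuous_intros)
  qed
  then show ?thesis by simp
qed

lemma one_plus_minus_power_gap:
  fixes e :: real
  assumes "0 \<le> e" "real n * e \<le> 1 / 2"
  shows "1 - real n * e \<le> (1 - e) ^ n" and "(1 + e) ^ n - (1 - e) ^ n \<le> 3 * (real n * e)"
proof -
  have small: "n = 0 \<or> e \<le> 1 / 2"
  proof (cases n)
    case (Suc m)
    then have "1 * e \<le> real n * e" using assms(1) by (intro mult_right_mono) auto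
    then show ?thesis using assms(2) by linarith
  qed simp
  show lower: "1 - real n * e \<le> (1 - e) ^ n"
    using small Bernoulli_inequality[of "- e" n] by auto
  have square_le: "e * e \<le> 1" if "e \<le> 1 / 2" using that assms(1) by (intro mult_le_one) auto
  have "(1 + e) ^ n * (1 - real n * e) \<le> (1 + e) ^ n * (1 - e) ^ n"
    using lower assms(1) by (intro mult_left_mono) auto
  also have "\<dots> = (1 - e\<^sup>2) ^ n" by (simp add: power_mult_distrib[symmetric] power2_eq_square algebra_simps)
  also have "\<dots> \<le> 1"
    using small square_le assms(1) by (cases "n = 0") (auto intro!: power_le_one simp: power2_eq_square)
  also have "1 \<le> (1 + 2 * (real n * e)) * (1 - real n * e)"
  proof -
    have "(1 + 2 * (real n * e)) * (1 - real n * e) = 1 + real n * e * (1 - 2 * (real n * e))"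
      by (simp add: algebra_simps)
    then show ?thesis using assms by simp
  qed
  finally have "(1 + e) ^ n \<le> 1 + 2 * (real n * e)"
    using assms by (simp add: mult_le_cancel_right)
  then show "(1 + e) ^ n - (1 - e) ^ n \<le> 3 * (real n * e)" using lower by linarith
qed

lemma weighted_sum_le_top_sum:
  fixes a C :: "nat \<Rightarrow> real"
  assumes t: "0 < t" "t \<le> d"
    and C: "\<And>j. j < d \<Longrightarrow> 0 \<le> C j" "\<And>j. j < d \<Longrightarrow> C j \<le> 1" "(\<Sum>j<d. C j) \<le> real t"
    and a: "\<And>i j. i \<le> j \<Longrightarrow> j < d \<Longrightarrow> a j \<le> a i" "0 \<le> a (t - 1)"
  shows "(\<Sum>j<d. a j * C j) \<le> (\<Sum>j<t. a j)"
proof -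
  have split: "(\<Sum>j<d. f j) = (\<Sum>j<t. f j) + (\<Sum>j\<in>{t..<d}. f j)" for f :: "nat \<Rightarrow> real"
    using sum.atLeastLessThan_concat[of 0 t d f] t by (simp add: lessThan_atLeast0)
  have "(\<Sum>j<d. a j * C j) = (\<Sum>j<t. a j + (C j - 1) * a j) + (\<Sum>j\<in>{t..<d}. C j * a j)"
    by (simp add: split algebra_simps)
  also have "\<dots> \<le> (\<Sum>j<t. a j + (C j - 1) * a (t - 1)) + (\<Sum>j\<in>{t..<d}. C j * a (t - 1))"
    using t C a(1) by (intro add_mono sum_mono add_left_mono mult_left_mono_neg mult_left_mono) auto
  also have "\<dots> = (\<Sum>j<t. a j) + ((\<Sum>j<d. C j) - real t) * a (t - 1)"
    by (simp add: split sum.distrib sum_distrib_right sum_subtractf algebra_simps)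
  also have "\<dots> \<le> (\<Sum>j<t. a j)"
    using C(3) a(2) by (simp add: mult_nonpos_nonneg)
  finally show ?thesis .
qed

lemma power_sum_concentrates_near_max:
  fixes \<sigma> :: "nat \<Rightarrow> real"
  assumes \<sigma>: "\<And>k. k < d \<Longrightarrow> 0 \<le> \<sigma> k" "\<And>k. k < d \<Longrightarrow> \<sigma> k \<le> s" and "0 \<le> s"
    and h: "0 \<le> h" "h \<le> 1" "1 \<le> real n * h" and tail: "real d * (1 - h) ^ n \<le> 1 / 3"
  defines "K \<equiv> {k \<in> {..<d}. (1 - h) * s \<le> \<sigma> k}"
  shows "(\<Sum>k<d. \<sigma> k ^ n) \<le> (\<Sum>k\<in>K. \<sigma> k ^ n) + s ^ n / 3"
    and "(\<Sum>k<d. (s - \<sigma> k) * \<sigma> k ^ n) \<le> h * s * ((\<Sum>k\<in>K. \<sigma> k ^ n) + s ^ n / 3)"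
proof -
  define y where "y = (1 - h) * s"
  define top where "top k = (if y \<le> \<sigma> k then \<sigma> k ^ n else 0)" for k
  have y: "0 \<le> y" using h \<open>0 \<le> s\<close> by (simp add: y_def)
  have K_sum: "(\<Sum>k\<in>K. \<sigma> k ^ n) = (\<Sum>k<d. top k)"
    unfolding K_def top_def y_def by (intro sum.inter_filter) simp
  have "real d * y ^ n = (real d * (1 - h) ^ n) * s ^ n" by (simp add: y_def power_mult_distrib)
  also have "\<dots> \<le> 1 / 3 * s ^ n" using tail \<open>0 \<le> s\<close> by (intro mult_right_mono) auto
  finally have y_pow: "real d * y ^ n \<le> s ^ n / 3" by simp
  have pointwise: "\<sigma> k ^ n \<le> top k + y ^ n \<and> (s - \<sigma> k) * \<sigma> k ^ n \<le> h * s * (top k + y ^ n)"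
    if k: "k < d" for k
  proof (cases "y \<le> \<sigma> k")
    case True
    then have "(s - \<sigma> k) * \<sigma> k ^ n \<le> (h * s) * \<sigma> k ^ n"
      using \<sigma>(1)[OF k] by (intro mult_right_mono) (auto simp: y_def algebra_simps)
    moreover have "0 \<le> h * s * y ^ n" using h y \<open>0 \<le> s\<close> by simp
    ultimately show ?thesis using True y by (simp add: top_def algebra_simps)
  next
    case False
    have "real (Suc n) * y \<le> real n * s"
      using mult_right_mono[OF h(3) \<open>0 \<le> s\<close>] mult_nonneg_nonneg[OF h(1) \<open>0 \<le> s\<close>]
      by (simp add: y_def algebra_simps)
    then have "(s - \<sigma> k) * \<sigma> k ^ n \<le> (s - y) * y ^ n"
      using False \<sigma>(1)[OF k] by (intro diff_mult_power_mono) auto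
    then show ?thesis
      using False \<sigma>(1)[OF k] by (auto simp: top_def y_def algebra_simps intro: power_mono)
  qed
  have "(\<Sum>k<d. \<sigma> k ^ n) \<le> (\<Sum>k<d. top k + y ^ n)"
    using pointwise by (intro sum_mono) auto
  then show "(\<Sum>k<d. \<sigma> k ^ n) \<le> (\<Sum>k\<in>K. \<sigma> k ^ n) + s ^ n / 3"
    using y_pow by (simp add: sum.distrib K_sum)
  have "(\<Sum>k<d. (s - \<sigma> k) * \<sigma> k ^ n) \<le> (\<Sum>k<d. h * s * (top k + y ^ n))"
    using pointwise by (intro sum_mono) auto
  also have "\<dots> = h * s * ((\<Sum>k\<in>K. \<sigma> k ^ n) + real d * y ^ n)"
    by (simp add: sum_distrib_left[symmetric] sum.distrib K_sum)
  also have "\<dots> \<le> h * s * ((\<Sum>k\<in>K. \<sigma> k ^ n) + s ^ n / 3)"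
    using y_pow h \<open>0 \<le> s\<close> by (intro mult_left_mono add_left_mono) auto
  finally show "(\<Sum>k<d. (s - \<sigma> k) * \<sigma> k ^ n) \<le> h * s * ((\<Sum>k\<in>K. \<sigma> k ^ n) + s ^ n / 3)" .
qed

section \<open>Doubly stochastic matrices\<close>

definition doubly_stochastic :: "nat \<Rightarrow> (nat \<Rightarrow> nat \<Rightarrow> real) \<Rightarrow> bool" where
  "doubly_stochastic d c \<longleftrightarrow> (\<forall>j<d. \<forall>k<d. 0 \<le> c j k)
     \<and> (\<forall>j<d. (\<Sum>k<d. c j k) = 1) \<and> (\<forall>k<d. (\<Sum>j<d. c j k) = 1)"

lemma doubly_stochastic_sum_columns:
  assumes "doubly_stochastic d c"
  shows "(\<Sum>k<d. \<Sum>j<d. a j * c j k) = (\<Sum>j<d. a j)"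
proof -
  have "(\<Sum>k<d. \<Sum>j<d. a j * c j k) = (\<Sum>j<d. a j * (\<Sum>k<d. c j k))"
    by (subst sum.swap) (simp add: sum_distrib_left)
  also have "\<dots> = (\<Sum>j<d. a j)" using assms by (simp add: doubly_stochastic_def)
  finally show ?thesis .
qed

lemma doubly_stochastic_power_mean_le:
  assumes "doubly_stochastic d c" "k < d" "\<And>j. j < d \<Longrightarrow> 0 \<le> x j"
  shows "(\<Sum>j<d. c j k * x j) ^ n \<le> (\<Sum>j<d. x j ^ n * c j k)"
  using power_convex_combination_le[of "{..<d}" "\<lambda>j. c j k" x n] assms
  by (simp add: doubly_stochastic_def mult.commute)

lemma doubly_stochastic_deficit:
  assumes c: "doubly_stochastic d c" and "t \<le> d"
    and \<sigma>: "\<And>k. k < d \<Longrightarrow> \<sigma> k \<le> s" and a: "\<And>j. j < d \<Longrightarrow> 0 \<le> a j"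
    and below: "\<And>j. j < t \<Longrightarrow> (\<Sum>k<d. \<sigma> k * c j k) \<le> (1 - g) * s"
  shows "g * s * (\<Sum>j<t. a j) \<le> (\<Sum>k<d. (s - \<sigma> k) * (\<Sum>j<d. a j * c j k))"
proof -
  have row_deficit: "(\<Sum>k<d. (s - \<sigma> k) * c j k) = s - (\<Sum>k<d. \<sigma> k * c j k)" if "j < d" for j
    using c that by (simp add: doubly_stochastic_def left_diff_distrib sum_subtractf sum_distrib_left[symmetric])
  have row_deficit_nonneg: "0 \<le> (\<Sum>k<d. (s - \<sigma> k) * c j k)" if "j < d" for j
    using c that \<sigma> by (intro sum_nonneg mult_nonneg_nonneg) (auto simp: doubly_stochastic_def)
  have "g * s * (\<Sum>j<t. a j) = (\<Sum>j<t. a j * (g * s))" by (simp add: sum_distrib_left mult_ac)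
  also have "\<dots> \<le> (\<Sum>j<t. a j * (\<Sum>k<d. (s - \<sigma> k) * c j k))"
  proof (intro sum_mono mult_left_mono)
    fix j assume "j \<in> {..<t}"
    then have j: "j < t" "j < d" using \<open>t \<le> d\<close> by auto
    have "g * s = s - (1 - g) * s" by (simp add: algebra_simps)
    then show "g * s \<le> (\<Sum>k<d. (s - \<sigma> k) * c j k)" using below[OF j(1)] row_deficit[OF j(2)] by linarith
    show "0 \<le> a j" using a j by simp
  qed
  also have "\<dots> \<le> (\<Sum>j<d. a j * (\<Sum>k<d. (s - \<sigma> k) * c j k))"
    using a row_deficit_nonneg \<open>t \<le> d\<close> by (intro sum_mono2) auto
  also have "\<dots> = (\<Sum>k<d. (s - \<sigma> k) * (\<Sum>j<d. a j * c j k))"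
    by (simp only: sum_distrib_left, subst sum.swap) (simp add: mult_ac)
  finally show ?thesis .
qed

lemma doubly_stochastic_column_block_le:
  assumes c: "doubly_stochastic d c" and K: "K \<subseteq> {..<d}" "card K \<le> t" and t: "0 < t" "t \<le> d"
    and a: "\<And>i j. i \<le> j \<Longrightarrow> j < d \<Longrightarrow> a j \<le> a i" "\<And>j. j < d \<Longrightarrow> 0 \<le> a j"
  shows "(\<Sum>k\<in>K. \<Sum>j<d. a j * c j k) \<le> (\<Sum>j<t. a j)"
proof -
  define C where "C j = (\<Sum>k\<in>K. c j k)" for j
  have "finite K" using K finite_subset by blast
  have "(\<Sum>j<d. C j) = (\<Sum>k\<in>K. \<Sum>j<d. c j k)" unfolding C_def by (rule sum.swap)
  also have "\<dots> = real (card K)" using c K by (simp add: doubly_stochastic_def subset_eq)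
  finally have C_sum: "(\<Sum>j<d. C j) \<le> real t" using K by simp
  have C_le: "C j \<le> 1" if "j < d" for j
  proof -
    have "C j \<le> (\<Sum>k<d. c j k)"
      unfolding C_def using c K that by (intro sum_mono2) (auto simp: doubly_stochastic_def)
    then show ?thesis using c that by (simp add: doubly_stochastic_def)
  qed
  have C_nonneg: "0 \<le> C j" if "j < d" for j
    unfolding C_def using c K that by (intro sum_nonneg) (auto simp: doubly_stochastic_def)
  have "(\<Sum>k\<in>K. \<Sum>j<d. a j * c j k) = (\<Sum>j<d. a j * C j)"
    unfolding C_def by (subst sum.swap) (simp add: sum_distrib_left)
  also have "\<dots> \<le> (\<Sum>j<t. a j)"
    using t C_nonneg C_le C_sum a by (intro weighted_sum_le_top_sum) auto
  finally show ?thesis .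
qed

lemma doubly_stochastic_power_transfer:
  assumes c: "doubly_stochastic d c" and "k < d"
    and lam: "\<And>j. j < d \<Longrightarrow> 0 \<le> lam j" and "0 \<le> \<sigma> k" "e \<le> 1"
    and lower: "(1 - e) * \<sigma> k \<le> (\<Sum>j<d. c j k * lam j)"
  shows "(1 - e) ^ n * \<sigma> k ^ n \<le> (\<Sum>j<d. lam j ^ n * c j k)"
proof -
  have "(1 - e) ^ n * \<sigma> k ^ n = ((1 - e) * \<sigma> k) ^ n" by (simp add: power_mult_distrib)
  also have "\<dots> \<le> (\<Sum>j<d. c j k * lam j) ^ n"
    using lower assms by (intro power_mono) auto
  also have "\<dots> \<le> (\<Sum>j<d. lam j ^ n * c j k)"
    using c \<open>k < d\<close> lam by (rule doubly_stochastic_power_mean_le)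
  finally show ?thesis .
qed

lemma sum_weighted_excess_le:
  fixes x y m \<sigma> :: "nat \<Rightarrow> real"
  assumes "\<And>k. k < d \<Longrightarrow> m k \<le> y k" "\<And>k. k < d \<Longrightarrow> m k \<le> x k"
    and "\<And>k. k < d \<Longrightarrow> 0 \<le> \<sigma> k" "\<And>k. k < d \<Longrightarrow> \<sigma> k \<le> s"
  shows "(\<Sum>k<d. (s - \<sigma> k) * y k) \<le> (\<Sum>k<d. (s - \<sigma> k) * x k) + s * (\<Sum>k<d. y k - m k)"
proof -
  have "(s - \<sigma> k) * y k \<le> (s - \<sigma> k) * x k + s * (y k - m k)" if "k < d" for k
  proof -
    have "(s - \<sigma> k) * y k = (s - \<sigma> k) * m k + (s - \<sigma> k) * (y k - m k)" by (simp add: algebra_simps)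
    also have "\<dots> \<le> (s - \<sigma> k) * x k + s * (y k - m k)"
      using assms that by (intro add_mono mult_left_mono mult_right_mono) auto
    finally show ?thesis .
  qed
  then have "(\<Sum>k<d. (s - \<sigma> k) * y k) \<le> (\<Sum>k<d. (s - \<sigma> k) * x k + s * (y k - m k))"
    by (intro sum_mono) auto
  also have "\<dots> = (\<Sum>k<d. (s - \<sigma> k) * x k) + s * (\<Sum>k<d. y k - m k)"
    by (simp add: sum.distrib sum_distrib_left)
  finally show ?thesis .
qed

(* Abstract setting of the main argument: c j k stands for (v_j . u_k)^2, lam and \<sigma> for the
   spectra of M and Sigma, n for p and g for gamma. *)
context
  fixes d n t :: nat and c :: "nat \<Rightarrow> nat \<Rightarrow> real" and lam \<sigma> :: "nat \<Rightarrow> real" and e g :: real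
  assumes c: "doubly_stochastic d c"
    and lam: "\<And>j. j < d \<Longrightarrow> 0 \<le> lam j" "\<And>i j. i \<le> j \<Longrightarrow> j < d \<Longrightarrow> lam j \<le> lam i"
    and \<sigma>: "\<And>k. k < d \<Longrightarrow> 0 \<le> \<sigma> k" "\<And>i k. i \<le> k \<Longrightarrow> k < d \<Longrightarrow> \<sigma> k \<le> \<sigma> i" "0 < \<sigma> 0"
    and lower: "\<And>k. k < d \<Longrightarrow> (1 - e) * \<sigma> k \<le> (\<Sum>j<d. c j k * lam j)"
    and moment: "(\<Sum>j<d. lam j ^ n) \<le> (1 + e) ^ n * (\<Sum>k<d. \<sigma> k ^ n)"
    and t: "0 < t" "t \<le> d" "t < d \<Longrightarrow> \<sigma> t < (1 - g) * \<sigma> 0"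
    and g: "0 < g" "g < 1" and e: "0 \<le> e" "real n * e = g / 49"
    and n: "1 \<le> real n * g / 4" "real d * (1 - g / 4) ^ n \<le> 1 / 3"
begin

lemma overlap_power_constants: "e \<le> 1" "48 / 49 \<le> (1 - e) ^ n" "(1 + e) ^ n - (1 - e) ^ n \<le> 3 * (g / 49)"
proof -
  have "0 < n" using n(1) by (cases n) auto
  then have "e \<le> real n * e" using e(1) by (simp add: mult_le_cancel_right1)
  then show "e \<le> 1" "48 / 49 \<le> (1 - e) ^ n" "(1 + e) ^ n - (1 - e) ^ n \<le> 3 * (g / 49)"
    using one_plus_minus_power_gap[of e n] e g by auto
qed

lemma column_power_lower:
  assumes "k < d"
  shows "(1 - e) ^ n * \<sigma> k ^ n \<le> (\<Sum>j<d. lam j ^ n * c j k)"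
  using c assms lam(1) \<sigma>(1)[OF assms] overlap_power_constants(1) lower[OF assms]
  by (rule doubly_stochastic_power_transfer)

lemma column_power_excess:
  "(\<Sum>k<d. (\<Sum>j<d. lam j ^ n * c j k) - (1 - e) ^ n * \<sigma> k ^ n) \<le> 3 * (g / 49) * (\<Sum>k<d. \<sigma> k ^ n)"
proof -
  have "(\<Sum>k<d. \<Sum>j<d. lam j ^ n * c j k) = (\<Sum>j<d. lam j ^ n)"
    by (rule doubly_stochastic_sum_columns[OF c])
  moreover have "((1 + e) ^ n - (1 - e) ^ n) * (\<Sum>k<d. \<sigma> k ^ n) \<le> 3 * (g / 49) * (\<Sum>k<d. \<sigma> k ^ n)"
    using overlap_power_constants(3) \<sigma>(1) by (intro mult_right_mono sum_nonneg) auto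
  ultimately show ?thesis
    using moment by (simp add: sum_subtractf sum_distrib_left[symmetric] left_diff_distrib)
qed

lemma top_rows_mass_lower:
  "48 / 49 * (\<Sum>k\<in>{k \<in> {..<d}. (1 - g / 4) * \<sigma> 0 \<le> \<sigma> k}. \<sigma> k ^ n) \<le> (\<Sum>j<t. lam j ^ n)"
proof -
  define K where "K = {k \<in> {..<d}. (1 - g / 4) * \<sigma> 0 \<le> \<sigma> k}"
  have "K \<subseteq> {..<t}"
  proof
    fix k assume "k \<in> K"
    then have "k < d" "(1 - g) * \<sigma> 0 < \<sigma> k"
      using mult_pos_pos[OF g(1) \<sigma>(3)] by (auto simp: K_def algebra_simps)
    then show "k \<in> {..<t}" using t(3) \<sigma>(2)[of t k] by fastforce
  qed
  have "48 / 49 * (\<Sum>k\<in>K. \<sigma> k ^ n) \<le> (1 - e) ^ n * (\<Sum>k\<in>K. \<sigma> k ^ n)"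
    using overlap_power_constants(2) \<sigma>(1) by (intro mult_right_mono sum_nonneg) (auto simp: K_def)
  also have "\<dots> \<le> (\<Sum>k\<in>K. \<Sum>j<d. lam j ^ n * c j k)"
    unfolding sum_distrib_left using column_power_lower by (intro sum_mono) (auto simp: K_def)
  also have "\<dots> \<le> (\<Sum>j<t. lam j ^ n)"
    using c \<open>K \<subseteq> {..<t}\<close> t lam
    by (intro doubly_stochastic_column_block_le)
      (auto simp: K_def intro: power_mono card_mono[of "{..<t}", simplified])
  finally show ?thesis unfolding K_def .
qed

lemma top_rows_mass_upper:
  assumes below: "\<And>j. j < t \<Longrightarrow> (\<Sum>k<d. \<sigma> k * c j k) \<le> (1 - g) * \<sigma> 0"
  shows "(\<Sum>j<t. lam j ^ n)
    \<le> (1 / 4 + 3 / 49) * ((\<Sum>k\<in>{k \<in> {..<d}. (1 - g / 4) * \<sigma> 0 \<le> \<sigma> k}. \<sigma> k ^ n) + \<sigma> 0 ^ n / 3)"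
proof -
  define s where "s = \<sigma> 0"
  define T where "T k = (\<Sum>j<d. lam j ^ n * c j k)" for k
  define S where "S = (\<Sum>k\<in>{k \<in> {..<d}. (1 - g / 4) * s \<le> \<sigma> k}. \<sigma> k ^ n)"
  have s: "0 < s" "\<And>k. k < d \<Longrightarrow> \<sigma> k \<le> s" using \<sigma> by (auto simp: s_def)
  have conc: "(\<Sum>k<d. \<sigma> k ^ n) \<le> S + s ^ n / 3"
    "(\<Sum>k<d. (s - \<sigma> k) * \<sigma> k ^ n) \<le> g / 4 * s * (S + s ^ n / 3)"
    using power_sum_concentrates_near_max[of d \<sigma> s "g / 4" n] \<sigma>(1) s g n unfolding S_def by auto
  have "g * s * (\<Sum>j<t. lam j ^ n) \<le> (\<Sum>k<d. (s - \<sigma> k) * T k)"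
    unfolding T_def using lam(1)
    by (intro doubly_stochastic_deficit[OF c t(2) s(2) _ below[folded s_def]]) auto
  also have "\<dots> \<le> (\<Sum>k<d. (s - \<sigma> k) * \<sigma> k ^ n) + s * (\<Sum>k<d. T k - (1 - e) ^ n * \<sigma> k ^ n)"
  proof (rule sum_weighted_excess_le)
    show "(1 - e) ^ n * \<sigma> k ^ n \<le> T k" if "k < d" for k
      unfolding T_def using that by (rule column_power_lower)
    have "(1 - e) ^ n \<le> 1" using e overlap_power_constants(1) by (intro power_le_one) auto
    then show "(1 - e) ^ n * \<sigma> k ^ n \<le> \<sigma> k ^ n" if "k < d" for k
      using \<sigma>(1)[OF that] overlap_power_constants(1) by (intro mult_left_le_one_le) auto
  qed (use \<sigma>(1) s(2) in auto)
  also have "\<dots> \<le> g / 4 * s * (S + s ^ n / 3) + s * (3 * (g / 49) * (S + s ^ n / 3))"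
  proof (intro add_mono[OF conc(2)] mult_left_mono)
    show "(\<Sum>k<d. T k - (1 - e) ^ n * \<sigma> k ^ n) \<le> 3 * (g / 49) * (S + s ^ n / 3)"
      unfolding T_def
      by (rule order.trans[OF column_power_excess], rule mult_left_mono) (use conc(1) g in auto)
  qed (use s in simp)
  also have "\<dots> = g * s * ((1 / 4 + 3 / 49) * (S + s ^ n / 3))" by (simp add: field_simps)
  finally have "g * s * (\<Sum>j<t. lam j ^ n) \<le> g * s * ((1 / 4 + 3 / 49) * (S + s ^ n / 3))" .
  then have "(\<Sum>j<t. lam j ^ n) \<le> (1 / 4 + 3 / 49) * (S + s ^ n / 3)"
    using mult_pos_pos[OF g(1) s(1)] by (rule mult_left_le_imp_le)
  then show ?thesis by (simp only: S_def s_def)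
qed

lemma doubly_stochastic_top_row: "\<exists>j<t. (1 - g) * \<sigma> 0 \<le> (\<Sum>k<d. \<sigma> k * c j k)"
proof (rule ccontr)
  define S where "S = (\<Sum>k\<in>{k \<in> {..<d}. (1 - g / 4) * \<sigma> 0 \<le> \<sigma> k}. \<sigma> k ^ n)"
  assume "\<not> ?thesis"
  then have "(\<Sum>j<t. lam j ^ n) \<le> (1 / 4 + 3 / 49) * (S + \<sigma> 0 ^ n / 3)"
    unfolding S_def by (intro top_rows_mass_upper) force
  moreover have "48 / 49 * S \<le> (\<Sum>j<t. lam j ^ n)" unfolding S_def by (rule top_rows_mass_lower)
  moreover have "\<sigma> 0 ^ n \<le> S"
    unfolding S_def using \<sigma>(1) mult_pos_pos[OF g(1) \<sigma>(3)] t(1,2)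
    by (intro member_le_sum) (auto simp: algebra_simps)
  ultimately show False using zero_less_power[OF \<sigma>(3), of n] by (simp add: algebra_simps)
qed

end

section \<open>Orthonormal bases and eigendecompositions\<close>

definition orthonormal :: "nat \<Rightarrow> (nat \<Rightarrow> nat \<Rightarrow> real) \<Rightarrow> bool" where
  "orthonormal d v \<longleftrightarrow> (\<forall>j<d. \<forall>l<d. (\<Sum>i<d. v j i * v l i) = (if j = l then 1 else 0))"

lemma eigdecomp_orthonormal: "eigdecomp d A lam v \<Longrightarrow> orthonormal d v"
  unfolding eigdecomp_def orthonormal_def by blast

lemma orthonormal_sum_inner:
  assumes "orthonormal d v" "j < d"
  shows "(\<Sum>m<d. f m * (\<Sum>i<d. v j i * v m i)) = f j"
proof -
  have "(\<Sum>m<d. f m * (\<Sum>i<d. v j i * v m i)) = (\<Sum>m<d. f m * (if j = m then 1 else 0))"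
    using assms unfolding orthonormal_def by (intro sum.cong) auto
  also have "\<dots> = f j"
    using assms(2) by (simp add: if_distrib[where f="\<lambda>x. f _ * x"] cong: if_cong)
  finally show ?thesis .
qed

lemma orthonormal_transpose:
  assumes "orthonormal d v"
  shows "orthonormal d (\<lambda>i j. v j i)"
  unfolding orthonormal_def
proof (intro allI impI)
  fix i l assume il: "i < d" "l < d"
  define V where "V = Matrix.mat d d (\<lambda>(j, i). v j i)"
  have V: "V \<in> carrier_mat d d" unfolding V_def by simp
  have "V * transpose_mat V = 1\<^sub>m d"
    using assms unfolding V_def orthonormal_def
    by (intro eq_matI) (auto simp: scalar_prod_def lessThan_atLeast0)
  then have "transpose_mat V * V = 1\<^sub>m d"
    using mat_mult_left_right_inverse[OF V] V by auto
  moreover have "(transpose_mat V * V) $$ (i, l) = (\<Sum>j<d. v j i * v j l)"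
    using il unfolding V_def by (simp add: scalar_prod_def lessThan_atLeast0)
  ultimately show "(\<Sum>j<d. v j i * v j l) = (if i = l then 1 else 0)" using il by simp
qed

lemma orthonormal_parseval:
  assumes "orthonormal d w"
  shows "(\<Sum>k<d. (\<Sum>i<d. x i * w k i)\<^sup>2) = (\<Sum>i<d. (x i)\<^sup>2)"
proof -
  have "(\<Sum>k<d. (\<Sum>i<d. x i * w k i)\<^sup>2) = (\<Sum>k<d. \<Sum>i<d. \<Sum>l<d. x i * (x l * (w k i * w k l)))"
    by (simp add: power2_eq_square sum_product mult_ac)
  also have "\<dots> = (\<Sum>i<d. \<Sum>k<d. \<Sum>l<d. x i * (x l * (w k i * w k l)))" by (rule sum.swap)
  also have "\<dots> = (\<Sum>i<d. \<Sum>l<d. \<Sum>k<d. x i * (x l * (w k i * w k l)))"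
    by (rule sum.cong[OF refl], rule sum.swap)
  also have "\<dots> = (\<Sum>i<d. x i * (\<Sum>l<d. x l * (\<Sum>k<d. w k i * w k l)))"
    by (simp add: sum_distrib_left)
  also have "\<dots> = (\<Sum>i<d. (x i)\<^sup>2)"
    using orthonormal_sum_inner[OF orthonormal_transpose[OF assms]]
    by (intro sum.cong) (simp_all add: power2_eq_square)
  finally show ?thesis .
qed

lemma orthonormal_overlap_doubly_stochastic:
  assumes v: "orthonormal d v" and u: "orthonormal d u"
  shows "doubly_stochastic d (\<lambda>j k. (\<Sum>i<d. v j i * u k i)\<^sup>2)"
proof -
  have unit: "(\<Sum>i<d. (w j i)\<^sup>2) = 1" if "orthonormal d w" "j < d" for w j
    using that unfolding orthonormal_def by (simp add: power2_eq_square)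
  have "(\<Sum>k<d. (\<Sum>i<d. v j i * u k i)\<^sup>2) = 1" if "j < d" for j
    using orthonormal_parseval[OF u, of "v j"] unit[OF v that] by simp
  moreover have "(\<Sum>j<d. (\<Sum>i<d. v j i * u k i)\<^sup>2) = 1" if "k < d" for k
    using orthonormal_parseval[OF v, of "u k"] unit[OF u that] by (simp add: mult.commute)
  ultimately show ?thesis unfolding doubly_stochastic_def by simp
qed

lemma eigdecomp_bilinear:
  assumes "eigdecomp d A lam v"
  shows "(\<Sum>i<d. \<Sum>l<d. x i * A i l * y l)
    = (\<Sum>j<d. lam j * (\<Sum>i<d. x i * v j i) * (\<Sum>l<d. y l * v j l))"
proof -
  have "(\<Sum>i<d. \<Sum>l<d. x i * A i l * y l) = (\<Sum>i<d. \<Sum>l<d. \<Sum>j<d. lam j * (x i * v j i) * (y l * v j l))"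
    using assms unfolding eigdecomp_def
    by (intro sum.cong refl) (simp add: sum_distrib_left sum_distrib_right algebra_simps)
  also have "\<dots> = (\<Sum>i<d. \<Sum>j<d. \<Sum>l<d. lam j * (x i * v j i) * (y l * v j l))"
    by (rule sum.cong[OF refl], rule sum.swap)
  also have "\<dots> = (\<Sum>j<d. \<Sum>i<d. \<Sum>l<d. lam j * (x i * v j i) * (y l * v j l))"
    by (rule sum.swap)
  also have "\<dots> = (\<Sum>j<d. (\<Sum>i<d. lam j * (x i * v j i)) * (\<Sum>l<d. y l * v j l))"
    by (simp only: sum_product)
  also have "\<dots> = (\<Sum>j<d. lam j * (\<Sum>i<d. x i * v j i) * (\<Sum>l<d. y l * v j l))"
    by (simp only: sum_distrib_left)
  finally show ?thesis .
qed

lemma qform_eigdecomp: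
  assumes "eigdecomp d A lam v"
  shows "qform d A x = (\<Sum>j<d. lam j * (\<Sum>i<d. x i * v j i)\<^sup>2)"
  using eigdecomp_bilinear[OF assms, of x x] unfolding qform_def
  by (simp add: power2_eq_square mult.assoc)

lemma qform_eigvec:
  assumes "eigdecomp d A lam v" "j < d"
  shows "qform d A (v j) = lam j"
proof -
  have v: "orthonormal d v" using assms(1) by (rule eigdecomp_orthonormal)
  have "qform d A (v j) = (\<Sum>m<d. (lam m * (\<Sum>i<d. v j i * v m i)) * (\<Sum>i<d. v j i * v m i))"
    by (simp add: qform_eigdecomp[OF assms(1)] power2_eq_square mult.assoc)
  also have "\<dots> = lam j * (\<Sum>i<d. v j i * v j i)" by (rule orthonormal_sum_inner[OF v assms(2)])
  also have "\<dots> = lam j" using v assms(2) unfolding orthonormal_def by simp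
  finally show ?thesis .
qed

lemma qform_add: "qform d (\<lambda>i k. A i k + B i k) x = qform d A x + qform d B x"
  unfolding qform_def by (simp add: sum.distrib algebra_simps)

lemma qform_diff: "qform d (\<lambda>i k. A i k - B i k) x = qform d A x - qform d B x"
  unfolding qform_def by (simp add: sum_subtractf algebra_simps)

lemma qform_scale: "qform d (\<lambda>i k. r * A i k) x = r * qform d A x"
  unfolding qform_def by (simp add: sum_distrib_left algebra_simps)

lemma psd_eigenvalue_nonneg: "psd d A \<Longrightarrow> eigdecomp d A lam v \<Longrightarrow> j < d \<Longrightarrow> 0 \<le> lam j"
  using qform_eigvec unfolding psd_def by metis

lemma psd_add: "psd d A \<Longrightarrow> psd d B \<Longrightarrow> psd d (\<lambda>i k. A i k + B i k)"
  unfolding psd_def symmetric_mat_def qform_add by simp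

(* Needed because schatten uses eigenvalues chosen by SOME. With s = v_j . w_k, both lam j * s and
   mu k * s equal v_j' A w_k, so lam j = mu k wherever the overlap s^2 is nonzero. *)
lemma eigdecomp_spectral_sum_eq:
  fixes f :: "real \<Rightarrow> real"
  assumes A1: "eigdecomp d A lam v" and A2: "eigdecomp d A mu w"
  shows "(\<Sum>j<d. f (lam j)) = (\<Sum>k<d. f (mu k))"
proof -
  define c where "c j k = (\<Sum>i<d. v j i * w k i)\<^sup>2" for j k
  have v: "orthonormal d v" and w: "orthonormal d w"
    using A1 A2 by (simp_all add: eigdecomp_orthonormal)
  have c: "doubly_stochastic d c"
    unfolding c_def using v w by (rule orthonormal_overlap_doubly_stochastic)
  have same: "f (lam j) * c j k = f (mu k) * c j k" if j: "j < d" and k: "k < d" for j k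
  proof -
    define s where "s = (\<Sum>i<d. v j i * w k i)"
    have "(\<Sum>i<d. \<Sum>l<d. v j i * A i l * w k l)
        = (\<Sum>m<d. (lam m * (\<Sum>l<d. w k l * v m l)) * (\<Sum>i<d. v j i * v m i))"
      unfolding eigdecomp_bilinear[OF A1] by (simp add: mult_ac)
    also have "\<dots> = lam j * (\<Sum>l<d. w k l * v j l)" by (rule orthonormal_sum_inner[OF v j])
    finally have "(\<Sum>i<d. \<Sum>l<d. v j i * A i l * w k l) = lam j * s"
      by (simp add: s_def mult.commute)
    moreover have "(\<Sum>i<d. \<Sum>l<d. v j i * A i l * w k l)
        = (\<Sum>m<d. (mu m * (\<Sum>i<d. v j i * w m i)) * (\<Sum>l<d. w k l * w m l))"
      unfolding eigdecomp_bilinear[OF A2] by (simp add: mult_ac)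
    moreover have "\<dots> = mu k * s" unfolding s_def by (rule orthonormal_sum_inner[OF w k])
    ultimately have "lam j * s = mu k * s" by linarith
    then show ?thesis by (cases "s = 0") (simp_all add: c_def s_def[symmetric])
  qed
  have "(\<Sum>j<d. f (lam j)) = (\<Sum>j<d. \<Sum>k<d. f (lam j) * c j k)"
    using c by (simp add: doubly_stochastic_def sum_distrib_left[symmetric])
  also have "\<dots> = (\<Sum>j<d. \<Sum>k<d. f (mu k) * c j k)"
    using same by (auto intro!: sum.cong)
  also have "\<dots> = (\<Sum>k<d. \<Sum>j<d. f (mu k) * c j k)" by (rule sum.swap)
  also have "\<dots> = (\<Sum>k<d. f (mu k))"
    using c by (simp add: doubly_stochastic_def sum_distrib_left[symmetric])
  finally show ?thesis .
qed

section \<open>Schatten norms\<close>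

lemma powr_inverse_power:
  fixes x :: real
  assumes "0 \<le> x" "0 < n"
  shows "(x powr (1 / real n)) ^ n = x"
proof (cases "x = 0")
  case False
  then have "(x powr (1 / real n)) ^ n = x powr (1 / real n * real n)"
    using assms by (simp add: powr_realpow[symmetric] powr_powr)
  then show ?thesis using assms by simp
qed (use assms in simp)

lemma schatten_power_eq:
  assumes "eigdecomp d A lam v" "\<And>j. j < d \<Longrightarrow> 0 \<le> lam j" "0 < n"
  shows "schatten d (real n) A ^ n = (\<Sum>j<d. lam j ^ n)"
proof -
  obtain w where "eigdecomp d A (eigenvalues d A) w"
    using someI_ex[of "\<lambda>mu. \<exists>w. eigdecomp d A mu w"] assms(1) unfolding eigenvalues_def by blast
  then have "(\<Sum>j<d. \<bar>eigenvalues d A j\<bar> powr real n) = (\<Sum>j<d. \<bar>lam j\<bar> powr real n)"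
    using assms(1) by (rule eigdecomp_spectral_sum_eq)
  also have "\<dots> = (\<Sum>j<d. lam j ^ n)"
  proof (intro sum.cong refl)
    fix j assume "j \<in> {..<d}"
    then show "\<bar>lam j\<bar> powr real n = lam j ^ n"
      using assms(2)[of j] assms(3) by (cases "lam j = 0") (simp_all add: powr_realpow)
  qed
  moreover have "0 \<le> (\<Sum>j<d. lam j ^ n)" using assms(2) by (auto intro: sum_nonneg)
  ultimately show ?thesis
    unfolding schatten_def using powr_inverse_power assms(3) by simp
qed

lemma schatten_le_imp_power_sum_le:
  assumes A: "eigdecomp d A lam v" "\<And>j. j < d \<Longrightarrow> 0 \<le> lam j"
    and B: "eigdecomp d B \<sigma> u" "\<And>k. k < d \<Longrightarrow> 0 \<le> \<sigma> k"
    and "0 < n" and le: "schatten d (real n) A \<le> r * schatten d (real n) B"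
  shows "(\<Sum>j<d. lam j ^ n) \<le> r ^ n * (\<Sum>k<d. \<sigma> k ^ n)"
proof -
  have "schatten d (real n) A ^ n \<le> (r * schatten d (real n) B) ^ n"
    using le by (intro power_mono) (simp_all add: schatten_def)
  then show ?thesis
    by (simp add: power_mult_distrib schatten_power_eq[OF A \<open>0 < n\<close>] schatten_power_eq[OF B \<open>0 < n\<close>])
qed

lemma loewner_lower_overlap_sum:
  assumes M: "eigdecomp d (\<lambda>i k. MG i k + MB i k) lam v" and Sig: "eigdecomp d Sig \<sigma> u"
    and MB: "psd d MB" and MG: "loewner_ge d MG (\<lambda>i k. r * Sig i k)" and "k < d"
  shows "r * \<sigma> k \<le> (\<Sum>j<d. (\<Sum>i<d. v j i * u k i)\<^sup>2 * lam j)"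
proof -
  have "r * \<sigma> k = r * qform d Sig (u k)" using qform_eigvec[OF Sig \<open>k < d\<close>] by simp
  also have "\<dots> \<le> qform d MG (u k)"
    using MG unfolding loewner_ge_def psd_def qform_diff qform_scale by auto
  also have "\<dots> \<le> qform d MG (u k) + qform d MB (u k)" using MB unfolding psd_def by auto
  also have "\<dots> = (\<Sum>j<d. (\<Sum>i<d. v j i * u k i)\<^sup>2 * lam j)"
    unfolding qform_add[symmetric] qform_eigdecomp[OF M] by (simp add: mult.commute)
  finally show ?thesis .
qed

lemma exponent_parameter_identities:
  fixes e L :: real
  assumes "0 < e" "0 \<le> L" "2 / 7 * sqrt (L / e) = real n"
  shows "real n * e = 14 * sqrt (e * L) / 49" and "real n * (14 * sqrt (e * L)) / 4 = L"
proof -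
  have "e * L = (L / e) * e\<^sup>2" using assms(1) by (simp add: power2_eq_square field_simps)
  then have "sqrt (e * L) = sqrt (L / e) * sqrt (e\<^sup>2)" by (simp only: real_sqrt_mult)
  then have "sqrt (e * L) = sqrt (L / e) * e" using assms(1) by simp
  then show "real n * e = 14 * sqrt (e * L) / 49"
    unfolding assms(3)[symmetric] by (simp add: field_simps)
  have "sqrt (L / e) * sqrt (e * L) = sqrt (L\<^sup>2)"
    using assms(1) by (simp add: real_sqrt_mult[symmetric] power2_eq_square)
  then show "real n * (14 * sqrt (e * L)) / 4 = L"
    unfolding assms(3)[symmetric] using assms(2) by (simp add: field_simps)
qed

lemma power_tail_le_third:
  assumes "0 < d" "0 \<le> h" "h \<le> 1" "real n * h = ln (3 * real d)"
  shows "real d * (1 - h) ^ n \<le> 1 / 3"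
proof -
  have "(1 - h) ^ n \<le> exp (- h) ^ n"
    using assms(2,3) exp_ge_add_one_self[of "- h"] by (intro power_mono) auto
  also have "\<dots> = exp (- (real n * h))" by (simp add: exp_of_nat_mult[symmetric])
  also have "\<dots> = 1 / (3 * real d)" using assms(1,4) by (simp add: exp_minus inverse_eq_divide)
  finally have "real d * (1 - h) ^ n \<le> real d * (1 / (3 * real d))" by (intro mult_left_mono) auto
  then show ?thesis using assms(1) by simp
qed

lemma exists_top_eigvec_rayleigh_ge:
  fixes d n t :: nat and e :: real and Sig MG MB v u :: "nat \<Rightarrow> nat \<Rightarrow> real" and lam \<sigma> :: "nat \<Rightarrow> real"
  defines "L \<equiv> ln (3 * real d)"
  defines "\<gamma> \<equiv> 14 * sqrt (e * L)"
  assumes d: "1 \<le> d" and e: "0 < e" and n: "2 / 7 * sqrt (L / e) = real n" "0 < n"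
    and Sig: "psd d Sig" and MG: "psd d MG" and MB: "psd d MB"
    and schatten_le: "schatten d (real n) (\<lambda>i k. MG i k + MB i k) \<le> (1 + e) * schatten d (real n) Sig"
    and MG_ge: "loewner_ge d MG (\<lambda>i k. (1 - e) * Sig i k)"
    and M_dec: "eigdecomp d (\<lambda>i k. MG i k + MB i k) lam v" and Sig_dec: "eigdecomp d Sig \<sigma> u"
    and t: "1 \<le> t" "t \<le> d" "t < d \<longrightarrow> \<sigma> t < (1 - \<gamma>) * \<sigma> 0"
  shows "\<exists>j<t. (1 - \<gamma>) * \<sigma> 0 \<le> qform d Sig (v j)"
proof -
  define c where "c j k = (\<Sum>i<d. v j i * u k i)\<^sup>2" for j k
  have \<sigma>: "\<And>k. k < d \<Longrightarrow> 0 \<le> \<sigma> k" using psd_eigenvalue_nonneg[OF Sig Sig_dec] .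
  have lam: "\<And>j. j < d \<Longrightarrow> 0 \<le> lam j" using psd_eigenvalue_nonneg[OF psd_add[OF MG MB] M_dec] .
  consider (trivial) "1 \<le> \<gamma> \<or> \<sigma> 0 \<le> 0" | (main) "\<gamma> < 1" "0 < \<sigma> 0" by linarith
  then show ?thesis
  proof cases
    case trivial
    then have "(1 - \<gamma>) * \<sigma> 0 \<le> 0" using \<sigma>[of 0] d by (auto intro: mult_nonpos_nonneg)
    also have "0 \<le> qform d Sig (v 0)" using Sig unfolding psd_def by blast
    finally show ?thesis using t(1) by (intro exI[of _ 0]) simp
  next
    case main
    have "ln 3 \<le> L" using d by (simp add: L_def)
    then have L: "1 < L" using ln3_gt_1 by linarith
    then have "0 \<le> \<gamma>" using e by (simp add: \<gamma>_def)
    have ne: "real n * e = \<gamma> / 49" and ng: "real n * \<gamma> / 4 = L"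
      using exponent_parameter_identities[OF e _ n(1)] L by (simp_all add: \<gamma>_def)
    have "\<exists>j<t. (1 - \<gamma>) * \<sigma> 0 \<le> (\<Sum>k<d. \<sigma> k * c j k)"
    proof (rule doubly_stochastic_top_row)
      show "doubly_stochastic d c" unfolding c_def
        using eigdecomp_orthonormal[OF M_dec] eigdecomp_orthonormal[OF Sig_dec]
        by (rule orthonormal_overlap_doubly_stochastic)
      show "(1 - e) * \<sigma> k \<le> (\<Sum>j<d. c j k * lam j)" if "k < d" for k
        unfolding c_def using M_dec Sig_dec MB MG_ge that by (rule loewner_lower_overlap_sum)
      show "(\<Sum>j<d. lam j ^ n) \<le> (1 + e) ^ n * (\<Sum>k<d. \<sigma> k ^ n)"
        using M_dec lam Sig_dec \<sigma> n(2) schatten_le by (rule schatten_le_imp_power_sum_le)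
      show "real d * (1 - \<gamma> / 4) ^ n \<le> 1 / 3"
        using d main ng \<open>0 \<le> \<gamma>\<close> by (intro power_tail_le_third) (auto simp: L_def)
    qed (use lam \<sigma> M_dec Sig_dec t main e ne ng L in \<open>auto simp: eigdecomp_def \<gamma>_def\<close>)
    moreover have "qform d Sig (v j) = (\<Sum>k<d. \<sigma> k * c j k)" for j
      unfolding qform_eigdecomp[OF Sig_dec] c_def by simp
    ultimately show ?thesis by auto
  qed
qed

lemma top_eigvecs_Max_rayleigh_ge:
  fixes d t :: nat and e :: real and Sig MG MB v u :: "nat \<Rightarrow> nat \<Rightarrow> real" and lam \<sigma> :: "nat \<Rightarrow> real"
  defines "p \<equiv> 2 / 7 * sqrt (ln (3 * real d) / e)"
  defines "\<gamma> \<equiv> 14 * sqrt (e * ln (3 * real d))"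
  assumes "1 \<le> d" "0 < e" and p: "p \<in> \<nat>" "0 < p"
    and "psd d Sig" "psd d MG" "psd d MB"
    and schatten_le: "schatten d p (\<lambda>i k. MG i k + MB i k) \<le> (1 + e) * schatten d p Sig"
    and "loewner_ge d MG (\<lambda>i k. (1 - e) * Sig i k)"
    and "eigdecomp d (\<lambda>i k. MG i k + MB i k) lam v" "eigdecomp d Sig \<sigma> u"
    and t: "1 \<le> t" "t \<le> d" "t < d \<longrightarrow> \<sigma> t < (1 - \<gamma>) * \<sigma> 0"
  shows "(1 - \<gamma>) * \<sigma> 0 \<le> Max ((\<lambda>j. qform d Sig (v j)) ` {..<t})"
proof -
  obtain n where n: "p = real n" using p(1) by (auto elim: Nats_cases)
  then obtain j where "j < t" "(1 - \<gamma>) * \<sigma> 0 \<le> qform d Sig (v j)"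
    using exists_top_eigvec_rayleigh_ge[of d e n Sig MG MB lam v \<sigma> u t] p(2) schatten_le assms
    unfolding p_def \<gamma>_def by auto
  then show ?thesis by (meson Max_ge finite_imageI finite_lessThan image_eqI lessThan_iff order.trans)
qed

(* The constant can be taken to be 1: smallness of eps only matters through gamma < 1, and for
   gamma >= 1 the claim is trivial. *)
theorem proposition4:
  shows "\<exists>c>0. \<forall>(d::nat) (\<epsilon>::real) (Sig::nat \<Rightarrow> nat \<Rightarrow> real) MG MB lam v sig u (t::nat).
    let p = 2 / 7 * sqrt (ln (3 * real d) / \<epsilon>);
        \<gamma> = 14 * sqrt (\<epsilon> * ln (3 * real d));
        M = (\<lambda>i k. MG i k + MB i k)
    in (d \<ge> 1 \<and> 0 < \<epsilon> \<and> \<epsilon> < c \<and> p \<in> \<nat> \<and> p > 0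
        \<and> psd d Sig \<and> psd d MG \<and> psd d MB
        \<and> schatten d p M \<le> (1 + \<epsilon>) * schatten d p Sig
        \<and> loewner_ge d (\<lambda>i k. (1 + \<epsilon>) * Sig i k) MG
        \<and> loewner_ge d MG (\<lambda>i k. (1 - \<epsilon>) * Sig i k)
        \<and> eigdecomp d M lam v \<and> eigdecomp d Sig sig u
        \<and> 1 \<le> t \<and> t \<le> d \<and> (t < d \<longrightarrow> sig t < (1 - \<gamma>) * sig 0))
       \<longrightarrow> Max ((\<lambda>j. qform d Sig (v j)) ` {..<t}) \<ge> (1 - \<gamma>) * sig 0"
  unfolding Let_def
  by (intro exI[of _ "1::real"] conjI allI impI) (simp, blast intro: top_eigvecs_Max_rayleigh_ge)

end
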